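(* Let $\omega_1,\dots,\omega_m$ be holomorphic $2$-forms on $\mathbb{H}^2$, continuous at the cusps $\mathbb{P}^1(K)$, and let $g:[0,2]^2\to\mathbb{H}^2\cup\mathbb{P}^1(K)$ be a membrane. Let $A\subset[0,1]^2$ be a diangle (a $2$-dimensional region homeomorphic to a disc, bounded by two arcs) with vertices $(0,0)$ and $(1,1)$, and let $B\subset[1,2]^2$ be a diangle with vertices $(1,1)$ and $(2,2)$; put $U=g(A)$, $V=g(B)$. Then (i) $\displaystyle\int_{g,U\cup V}\omega_1\cdots\omega_m=\sum_{j=0}^m\int_{g,U}\omega_1\cdots\omega_j\int_{g,V}\omega_{j+1}\cdots\omega_m$ (empty integrals being $1$); (ii) $J^a(g;A\cup B;\Omega)=J^a(g;A;\Omega)\,J^a(g;B;\Omega)$.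
   Context: $K$ is a real quadratic field, $\mathbb{H}^2=\mathbb{H}\times\mathbb{H}$ with cusps $\mathbb{P}^1(K)$. A membrane on a square $[0,L]^2$ is a continuous piecewise differentiable map into $\mathbb{H}^2\cup\mathbb{P}^1(K)$ sending each coordinate line $\{t_1=a\}$, $\{t_2=a\}$ into a finite union of holomorphic curves. For a region $A$ in the square, the (type a, ordered) iterated integral over $U=g(A)$ is \[\int_{g,U}\omega_1\cdots\omega_m=\int_{D_A}\bigwedge_{j=1}^m g^*\omega_j(t_{1,j},t_{2,j}),\] where $D_A=\{(t_{1,1},\dots,t_{1,m},t_{2,1},\dots,t_{2,m}): t_{1,1}\le\dots\le t_{1,m},\ t_{2,1}\le\dots\le t_{2,m},\ (t_{1,j},t_{2,j})\in A\text{ for }j=1,\dots,m\}$ and $g^*\omega_j(x,y)$ is the pulled-back $2$-form in coordinates $(x,y)$. With $\Omega=(\omega_1,\dots,\omega_m)$ and non-commuting formal variables $X_1,\dots,X_m$, the type a generating series is \[J^a(g;A;\Omega)=1+\sum_{k\ge1}\sum_{c:\{1,\dots,k\}\to\{1,\dots,m\}}X_{c(1)}\cdots X_{c(k)}\int_{g,g(A)}\omega_{c(1)}\cdots\omega_{c(k)},\] an element of the ring of non-commutative formal power series $\mathbb{C}\langle\langle X_1,\dots,X_m\rangle\rangle$. *)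

theory Defs
  imports "HOL-Analysis.Analysis" "HOL-Computational_Algebra.Squarefree"
begin

text \<open>A real quadratic field is Q(sqrt d) for a unique squarefree integer d > 1.
  Elements a + b sqrt d of K are represented by pairs of rationals (a,b).\<close>

definition real_quadratic_param :: "int \<Rightarrow> bool" where
  "real_quadratic_param d \<longleftrightarrow> d > 1 \<and> squarefree d"

definition emb1 :: "int \<Rightarrow> rat \<times> rat \<Rightarrow> real" where
  "emb1 d x = of_rat (fst x) + of_rat (snd x) * sqrt (of_int d)"

definition emb2 :: "int \<Rightarrow> rat \<times> rat \<Rightarrow> real" where
  "emb2 d x = of_rat (fst x) - of_rat (snd x) * sqrt (of_int d)"

datatype cusp = CInf | CFin "rat \<times> rat"

text \<open>Points of H^2 \<union> P^1(K); only the elements of hspace are meaningful.\<close>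
datatype hpt = Inner complex complex | Cusp cusp

definition upper :: "complex set" where
  "upper = {z. Im z > 0}"

definition hspace :: "hpt set" where
  "hspace = {Inner z w |z w. z \<in> upper \<and> w \<in> upper} \<union> range Cusp"

fun horoball :: "int \<Rightarrow> cusp \<Rightarrow> real \<Rightarrow> hpt set" where
  "horoball d CInf C = {Inner z w |z w. z \<in> upper \<and> w \<in> upper \<and> Im z * Im w > C}"
| "horoball d (CFin a) C = {Inner z w |z w. z \<in> upper \<and> w \<in> upper \<and>
      (Im z / (cmod (z - of_real (emb1 d a)))\<^sup>2) * (Im w / (cmod (w - of_real (emb2 d a)))\<^sup>2) > C}"

definition satake_open :: "int \<Rightarrow> hpt set \<Rightarrow> bool" where
  "satake_open d U \<longleftrightarrow> U \<subseteq> hspace \<and> open {(z, w). Inner z w \<in> U} \<and>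
     (\<forall>\<kappa>. Cusp \<kappa> \<in> U \<longrightarrow> (\<exists>C. horoball d \<kappa> C \<subseteq> U))"

definition satake_top :: "int \<Rightarrow> hpt topology" where
  "satake_top d = topology (satake_open d)"

text \<open>A holomorphic 2-form f(z1,z2) dz1 \<and> dz2 on H^2 is given by its coefficient f
  (holomorphic = continuous and separately holomorphic, Osgood).\<close>
definition holo_form :: "(complex \<Rightarrow> complex \<Rightarrow> complex) \<Rightarrow> bool" where
  "holo_form f \<longleftrightarrow> continuous_on (upper \<times> upper) (\<lambda>(z, w). f z w) \<and>
     (\<forall>w\<in>upper. (\<lambda>z. f z w) holomorphic_on upper) \<and>
     (\<forall>z\<in>upper. (\<lambda>w. f z w) holomorphic_on upper)"

definition cont_at_cusps :: "int \<Rightarrow> (complex \<Rightarrow> complex \<Rightarrow> complex) \<Rightarrow> bool" where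
  "cont_at_cusps d f \<longleftrightarrow> (\<exists>F. continuous_map (satake_top d) euclidean (F :: hpt \<Rightarrow> complex) \<and>
     (\<forall>z\<in>upper. \<forall>w\<in>upper. F (Inner z w) = f z w))"

definition holo_curve :: "hpt set \<Rightarrow> bool" where
  "holo_curve S \<longleftrightarrow> (\<exists>D \<phi>1 \<phi>2. open D \<and> connected D \<and> D \<noteq> {} \<and>
     \<phi>1 holomorphic_on D \<and> \<phi>2 holomorphic_on D \<and> \<phi>1 ` D \<subseteq> upper \<and> \<phi>2 ` D \<subseteq> upper \<and>
     \<not> (\<phi>1 constant_on D \<and> \<phi>2 constant_on D) \<and>
     S = (\<lambda>x. Inner (\<phi>1 x) (\<phi>2 x)) ` D)"

definition sq :: "real \<Rightarrow> (real \<times> real) set" where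
  "sq L = {0..L} \<times> {0..L}"

text \<open>H^2-coordinates of a map into H^2 \<union> P^1(K) (junk value at cusps).\<close>
definition coords :: "(real \<times> real \<Rightarrow> hpt) \<Rightarrow> real \<times> real \<Rightarrow> complex \<times> complex" where
  "coords g t = (case g t of Inner z w \<Rightarrow> (z, w) | Cusp _ \<Rightarrow> (0, 0))"

definition is_inner :: "hpt \<Rightarrow> bool" where
  "is_inner p \<longleftrightarrow> (\<exists>z w. p = Inner z w)"

definition piecewise_diff :: "real \<Rightarrow> (real \<times> real \<Rightarrow> hpt) \<Rightarrow> bool" where
  "piecewise_diff L g \<longleftrightarrow> (\<exists>P. finite P \<and> (\<forall>t\<in>sq L. fst t \<notin> P \<and> snd t \<notin> P \<longrightarrow>
      is_inner (g t) \<and> coords g differentiable (at t)))"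

definition membrane :: "int \<Rightarrow> real \<Rightarrow> (real \<times> real \<Rightarrow> hpt) \<Rightarrow> bool" where
  "membrane d L g \<longleftrightarrow> L > 0 \<and>
     continuous_map (top_of_set (sq L)) (satake_top d) g \<and> g ` sq L \<subseteq> hspace \<and>
     piecewise_diff L g \<and>
     (\<forall>a\<in>{0..L}. \<exists>Cs. finite Cs \<and> (\<forall>C\<in>Cs. holo_curve C) \<and>
         g ` ({a} \<times> {0..L}) \<subseteq> \<Union>Cs \<union> range Cusp) \<and>
     (\<forall>a\<in>{0..L}. \<exists>Cs. finite Cs \<and> (\<forall>C\<in>Cs. holo_curve C) \<and>
         g ` ({0..L} \<times> {a}) \<subseteq> \<Union>Cs \<union> range Cusp)"

text \<open>Coefficient of g^*(f dz1 \<and> dz2) with respect to dx \<and> dy.\<close>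
definition pullback :: "(real \<times> real \<Rightarrow> hpt) \<Rightarrow> (complex \<Rightarrow> complex \<Rightarrow> complex) \<Rightarrow> real \<times> real \<Rightarrow> complex" where
  "pullback g f t = (if is_inner (g t) \<and> coords g differentiable (at t) then
     (let D = frechet_derivative (coords g) (at t);
          u = D (1, 0); v = D (0, 1)
      in f (fst (coords g t)) (snd (coords g t)) * (fst u * snd v - fst v * snd u))
     else 0)"

definition DA :: "(real \<times> real) set \<Rightarrow> nat \<Rightarrow> (nat \<Rightarrow> real \<times> real) set" where
  "DA A n = {t \<in> PiE {..<n} (\<lambda>_. UNIV). (\<forall>j<n. t j \<in> A) \<and>
      (\<forall>j. Suc j < n \<longrightarrow> fst (t j) \<le> fst (t (Suc j)) \<and> snd (t j) \<le> snd (t (Suc j)))}"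

definition iter_int :: "(real \<times> real \<Rightarrow> hpt) \<Rightarrow> (real \<times> real) set \<Rightarrow>
    (complex \<Rightarrow> complex \<Rightarrow> complex) list \<Rightarrow> complex" where
  "iter_int g A ws = set_lebesgue_integral (PiM {..<length ws} (\<lambda>_. lborel)) (DA A (length ws))
      (\<lambda>t. \<Prod>j<length ws. pullback g (ws ! j) (t j))"

text \<open>Non-commutative formal power series in X_0,...,X_{m-1}: coefficient functions on
  words (lists of letter indices). Cauchy product:\<close>
definition nc_mult :: "(nat list \<Rightarrow> complex) \<Rightarrow> (nat list \<Rightarrow> complex) \<Rightarrow> nat list \<Rightarrow> complex" where
  "nc_mult F G w = (\<Sum>k\<le>length w. F (take k w) * G (drop k w))"

definition Ja :: "(real \<times> real \<Rightarrow> hpt) \<Rightarrow> (real \<times> real) set \<Rightarrow>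
    (complex \<Rightarrow> complex \<Rightarrow> complex) list \<Rightarrow> nat list \<Rightarrow> complex" where
  "Ja g A ws w = (if set w \<subseteq> {..<length ws} then iter_int g A (map (\<lambda>i. ws ! i) w) else 0)"

definition diangle :: "(real \<times> real) set \<Rightarrow> real \<times> real \<Rightarrow> real \<times> real \<Rightarrow> bool" where
  "diangle A p q \<longleftrightarrow> (\<exists>\<gamma>1 \<gamma>2. arc \<gamma>1 \<and> arc \<gamma>2 \<and>
      pathstart \<gamma>1 = p \<and> pathfinish \<gamma>1 = q \<and> pathstart \<gamma>2 = p \<and> pathfinish \<gamma>2 = q \<and>
      path_image \<gamma>1 \<inter> path_image \<gamma>2 = {p, q} \<and>
      A = path_image \<gamma>1 \<union> path_image \<gamma>2 \<union> inside (path_image \<gamma>1 \<union> path_image \<gamma>2) \<and>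
      A homeomorphic (cball (0::real \<times> real) 1))"

end

theory Submission
  imports Defs
begin

text \<open>Every point of \<open>A\<close> lies weakly below every point of \<open>B\<close> in both coordinates, so
  \<open>A \<inter> B\<close> is at most the common vertex and hence a null set. Off a null set, a chain
  \<open>t\<^sub>1 \<le> \<dots> \<le> t\<^sub>n\<close> in \<open>A \<union> B\<close> therefore splits uniquely: its first \<open>j\<close> points lie in \<open>A\<close>
  and the others in \<open>B\<close>. So \<open>D\<^bsub>A\<union>B\<^esub>\<close> is, up to a null set, the disjoint union over \<open>j\<close> of
  \<open>D\<^bsub>A\<^esub> \<times> D\<^bsub>B\<^esub>\<close> in \<open>j\<close> and \<open>n - j\<close> variables, and Fubini on the product of copies of Lebesgue
  measure factors each piece into an integral over \<open>U\<close> times one over \<open>V\<close>. Part (ii) is part (i)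
  applied to each word of the generating series.\<close>

section \<open>Products of a sigma-finite measure\<close>

definition tuple_drop :: "nat \<Rightarrow> nat \<Rightarrow> (nat \<Rightarrow> 'a) \<Rightarrow> nat \<Rightarrow> 'a" where
  "tuple_drop j n t = (\<lambda>k\<in>{..<n - j}. t (k + j))"

lemma measurable_tuple_drop:
  assumes "{j..<n} \<subseteq> L"
  shows "tuple_drop j n \<in> measurable (PiM L (\<lambda>_. M)) (PiM {..<n - j} (\<lambda>_. M))"
  unfolding tuple_drop_def
  by (rule measurable_restrict, rule measurable_component_singleton) (use assms in auto)

lemma vimage_reindex_PiE:
  assumes f: "bij_betw f I J" and A: "\<And>i. i \<in> I \<Longrightarrow> A i \<subseteq> space M"
  shows "(\<lambda>\<omega>. \<lambda>i\<in>I. \<omega> (f i)) -` PiE I A \<inter> space (PiM J (\<lambda>_. M)) =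
    PiE J (\<lambda>j. A (the_inv_into I f j))"
proof -
  let ?g = "the_inv_into I f"
  have g: "?g j \<in> I" "f (?g j) = j" if "j \<in> J" for j
    using f that by (auto simp: bij_betw_def the_inv_into_into f_the_inv_into_f)
  have fI: "f i \<in> J" and gf: "?g (f i) = i" if "i \<in> I" for i
    using f that by (auto simp: bij_betw_def the_inv_into_f_f)
  show ?thesis
  proof (intro set_eqI iffI)
    fix \<omega> assume "\<omega> \<in> (\<lambda>\<omega>. \<lambda>i\<in>I. \<omega> (f i)) -` PiE I A \<inter> space (PiM J (\<lambda>_. M))"
    then have "\<forall>i\<in>I. \<omega> (f i) \<in> A i" and "\<omega> \<in> extensional J"
      by (auto simp: space_PiM PiE_iff)
    then show "\<omega> \<in> PiE J (\<lambda>j. A (?g j))"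
      using g by (simp add: PiE_iff) metis
  next
    fix \<omega> assume \<omega>: "\<omega> \<in> PiE J (\<lambda>j. A (?g j))"
    then have "\<omega> (f i) \<in> A i" if "i \<in> I" for i
      using that fI gf by (metis PiE_mem)
    moreover have "\<omega> \<in> space (PiM J (\<lambda>_. M))"
      using \<omega> g A by (force simp: space_PiM PiE_iff)
    ultimately show "\<omega> \<in> (\<lambda>\<omega>. \<lambda>i\<in>I. \<omega> (f i)) -` PiE I A \<inter> space (PiM J (\<lambda>_. M))"
      by auto
  qed
qed

context sigma_finite_measure
begin

lemma product_sigma_finite_const: "product_sigma_finite (\<lambda>_. M)"
  by (simp add: product_sigma_finite_def sigma_finite_measure_axioms)

lemma AE_PiM_components_notin_null_set:
  assumes I: "finite I" and N: "N \<in> null_sets M"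
  shows "AE t in PiM I (\<lambda>_. M). \<forall>k\<in>I. t k \<notin> N"
proof -
  interpret P: product_sigma_finite "\<lambda>_. M" by (rule product_sigma_finite_const)
  have "AE t in PiM I (\<lambda>_. M). t k \<notin> N" if k: "k \<in> I" for k
  proof (rule AE_I')
    define X where "X i = (if i = k then N else space M)" for i
    have X: "X i \<in> sets M" for i
      using N by (simp add: X_def null_setsD2)
    have "N \<subseteq> space M"
      using N by (simp add: null_setsD2 sets.sets_into_space)
    then show "{t \<in> space (PiM I (\<lambda>_. M)). \<not> t k \<notin> N} \<subseteq> PiE I X"
      by (auto simp: space_PiM X_def PiE_iff extensional_def)
    have "emeasure (PiM I (\<lambda>_. M)) (PiE I X) = (\<Prod>i\<in>I. emeasure M (X i))"
      using I X by (intro P.emeasure_PiM) auto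
    also have "\<dots> = 0"
      using I k N by (intro prod_zero) (auto simp: X_def)
    finally show "PiE I X \<in> null_sets (PiM I (\<lambda>_. M))"
      using I X by (auto intro: sets_PiM_I_finite)
  qed
  then show ?thesis
    using I by (simp add: eventually_ball_finite)
qed

lemma distr_PiM_reindex_bij:
  assumes I: "finite I" and f: "bij_betw f I J"
  shows "distr (PiM J (\<lambda>_. M)) (PiM I (\<lambda>_. M)) (\<lambda>\<omega>. \<lambda>i\<in>I. \<omega> (f i)) = PiM I (\<lambda>_. M)"
proof -
  interpret P: product_sigma_finite "\<lambda>_. M" by (rule product_sigma_finite_const)
  have fI: "f i \<in> J" if "i \<in> I" for i
    using f that by (auto simp: bij_betw_def)
  have meas: "(\<lambda>\<omega>. \<lambda>i\<in>I. \<omega> (f i)) \<in> measurable (PiM J (\<lambda>_. M)) (PiM I (\<lambda>_. M))"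
    by (intro measurable_restrict measurable_component_singleton fI)
  have J: "finite J"
    using f I bij_betw_finite by blast
  show ?thesis
  proof (rule P.PiM_eqI[OF I])
    fix A assume A: "\<And>i. i \<in> I \<Longrightarrow> A i \<in> sets M"
    let ?g = "the_inv_into I f"
    have "emeasure (distr (PiM J (\<lambda>_. M)) (PiM I (\<lambda>_. M)) (\<lambda>\<omega>. \<lambda>i\<in>I. \<omega> (f i))) (PiE I A)
        = emeasure (PiM J (\<lambda>_. M)) (PiE J (\<lambda>j. A (?g j)))"
      using A by (simp add: emeasure_distr[OF meas] sets_PiM_I_finite I
          vimage_reindex_PiE[OF f] sets.sets_into_space)
    also have "\<dots> = (\<Prod>j\<in>J. emeasure M (A (?g j)))"
      using A f J by (intro P.emeasure_PiM) (auto simp: bij_betw_def the_inv_into_into)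
    also have "\<dots> = (\<Prod>i\<in>I. emeasure M (A i))"
      using f by (simp add: prod.reindex_bij_betw[OF f, symmetric] bij_betw_def the_inv_into_f_f)
    finally show "emeasure (distr (PiM J (\<lambda>_. M)) (PiM I (\<lambda>_. M)) (\<lambda>\<omega>. \<lambda>i\<in>I. \<omega> (f i))) (PiE I A)
        = (\<Prod>i\<in>I. emeasure M (A i))" .
  qed simp
qed

lemma integral_PiM_reindex_bij:
  fixes h :: "_ \<Rightarrow> 'b::{banach, second_countable_topology}"
  assumes "finite I" "bij_betw f I J" and h: "h \<in> borel_measurable (PiM I (\<lambda>_. M))"
  shows "integral\<^sup>L (PiM I (\<lambda>_. M)) h = (\<integral>\<omega>. h (\<lambda>i\<in>I. \<omega> (f i)) \<partial>PiM J (\<lambda>_. M))"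
proof -
  have "f i \<in> J" if "i \<in> I" for i
    using assms(2) that by (auto simp: bij_betw_def)
  then have "(\<lambda>\<omega>. \<lambda>i\<in>I. \<omega> (f i)) \<in> measurable (PiM J (\<lambda>_. M)) (PiM I (\<lambda>_. M))"
    by (intro measurable_restrict measurable_component_singleton)
  then show ?thesis
    using integral_distr[OF _ h] distr_PiM_reindex_bij[OF assms(1,2)] by metis
qed

lemma integral_PiM_split:
  fixes \<phi> \<psi> :: "(nat \<Rightarrow> 'a) \<Rightarrow> 'b::{real_normed_field, banach, second_countable_topology}"
  assumes j: "j \<le> n" and \<psi>: "\<psi> \<in> borel_measurable (PiM {..<n - j} (\<lambda>_. M))"
    and int: "integrable (PiM {..<n} (\<lambda>_. M)) (\<lambda>t. \<phi> (restrict t {..<j}) * \<psi> (tuple_drop j n t))"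
  shows "(\<integral>t. \<phi> (restrict t {..<j}) * \<psi> (tuple_drop j n t) \<partial>PiM {..<n} (\<lambda>_. M))
    = integral\<^sup>L (PiM {..<j} (\<lambda>_. M)) \<phi> * integral\<^sup>L (PiM {..<n - j} (\<lambda>_. M)) \<psi>"
proof -
  interpret P: product_sigma_finite "\<lambda>_. M" by (rule product_sigma_finite_const)
  let ?I = "{..<j}" and ?J = "{j..<n}"
  have IJ: "{..<n} = ?I \<union> ?J" "?I \<inter> ?J = {}"
    using j by auto
  have shift: "bij_betw (\<lambda>k. k + j) {..<n - j} ?J"
    using j by (simp add: bij_betw_def inj_on_def image_add_atLeastLessThan' lessThan_atLeast0)
  have drop_merge: "tuple_drop j n (merge ?I ?J (x, y)) = tuple_drop j n y" for x y :: "nat \<Rightarrow> 'a"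
    by (auto simp: tuple_drop_def merge_def intro!: restrict_ext)
  have "(\<integral>t. \<phi> (restrict t ?I) * \<psi> (tuple_drop j n t) \<partial>PiM {..<n} (\<lambda>_. M))
      = (\<integral>x. \<integral>y. \<phi> (restrict (merge ?I ?J (x, y)) ?I) * \<psi> (tuple_drop j n (merge ?I ?J (x, y)))
          \<partial>PiM ?J (\<lambda>_. M) \<partial>PiM ?I (\<lambda>_. M))"
    using int unfolding IJ(1) by (intro P.product_integral_fold IJ(2)) auto
  also have "\<dots> = (\<integral>x. \<phi> x * (\<integral>y. \<psi> (tuple_drop j n y) \<partial>PiM ?J (\<lambda>_. M)) \<partial>PiM ?I (\<lambda>_. M))"
  proof (intro Bochner_Integration.integral_cong refl)
    fix x assume "x \<in> space (PiM ?I (\<lambda>_. M))"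
    then have "restrict (merge ?I ?J (x, y)) ?I = x" for y
      using IJ(2) by (simp add: space_PiM PiE_def extensional_restrict)
    then show "(\<integral>y. \<phi> (restrict (merge ?I ?J (x, y)) ?I) * \<psi> (tuple_drop j n (merge ?I ?J (x, y)))
        \<partial>PiM ?J (\<lambda>_. M)) = \<phi> x * (\<integral>y. \<psi> (tuple_drop j n y) \<partial>PiM ?J (\<lambda>_. M))"
      by (simp only: drop_merge integral_mult_right_zero)
  qed
  also have "(\<integral>y. \<psi> (tuple_drop j n y) \<partial>PiM ?J (\<lambda>_. M)) = integral\<^sup>L (PiM {..<n - j} (\<lambda>_. M)) \<psi>"
    using integral_PiM_reindex_bij[OF _ shift \<psi>] by (simp add: tuple_drop_def)
  finally show ?thesis
    by (simp only: integral_mult_left_zero)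
qed

end

section \<open>Monotone chains of points in the plane\<close>

abbreviation lborel_pow :: "nat \<Rightarrow> (nat \<Rightarrow> real \<times> real) measure" where
  "lborel_pow n \<equiv> PiM {..<n} (\<lambda>_. lborel)"

lemma sets_DA:
  assumes S: "S \<in> sets borel"
  shows "DA S n \<in> sets (lborel_pow n)"
proof -
  have component: "(\<lambda>t. t j) \<in> measurable (lborel_pow n) borel" if "j < n" for j
    using that measurable_component_singleton[of j "{..<n}" "\<lambda>_. lborel"] by simp
  have coords: "(\<lambda>t. fst (t j)) \<in> borel_measurable (lborel_pow n)"
    "(\<lambda>t. snd (t j)) \<in> borel_measurable (lborel_pow n)" if "j < n" for j
    by (intro measurable_compose[OF component[OF that]]
        borel_measurable_continuous_onI continuous_intros)+
  have chain: "Measurable.pred (lborel_pow n)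
      (\<lambda>t. Suc j < n \<longrightarrow> fst (t j) \<le> fst (t (Suc j)) \<and> snd (t j) \<le> snd (t (Suc j)))" for j
  proof (cases "Suc j < n")
    case True
    then have "j < n" by simp
    with True show ?thesis
      using borel_measurable_le[OF coords(1) coords(1)] borel_measurable_le[OF coords(2) coords(2)]
      unfolding pred_def by (simp only: simp_thms Collect_conj_eq2 sets.Int)
  qed simp
  have "Measurable.pred (lborel_pow n) (\<lambda>t. (\<forall>j\<in>{..<n}. t j \<in> S) \<and>
      (\<forall>j. Suc j < n \<longrightarrow> fst (t j) \<le> fst (t (Suc j)) \<and> snd (t j) \<le> snd (t (Suc j))))"
    by (intro pred_intros_logic(3) pred_intros_countable(1) pred_intros_countable_bounded(3)
        pred_sets2[OF S component] chain) simp
  moreover have "DA S n = {t \<in> space (lborel_pow n). (\<forall>j\<in>{..<n}. t j \<in> S) \<and>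
      (\<forall>j. Suc j < n \<longrightarrow> fst (t j) \<le> fst (t (Suc j)) \<and> snd (t j) \<le> snd (t (Suc j)))}"
    by (auto simp: DA_def space_PiM)
  ultimately show ?thesis
    by (simp add: pred_def)
qed

lemma DA_iff:
  "t \<in> DA S n \<longleftrightarrow> t \<in> extensional {..<n} \<and> (\<forall>j<n. t j \<in> S) \<and> (\<forall>j. Suc j < n \<longrightarrow> t j \<le> t (Suc j))"
  by (auto simp: DA_def less_eq_prod_def PiE_def)

lemma DA_mono:
  assumes "t \<in> DA S n" "i \<le> k" "k < n"
  shows "t i \<le> t k"
  using assms(2,3)
proof (induction k rule: dec_induct)
  case (step k)
  then show ?case
    using assms(1) by (auto simp: DA_iff intro: order_trans)
qed simp

lemma restrict_in_DA_iff:
  "restrict t {..<j} \<in> DA S j \<longleftrightarrow> (\<forall>k<j. t k \<in> S) \<and> (\<forall>k. Suc k < j \<longrightarrow> t k \<le> t (Suc k))"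
  by (simp add: DA_iff)

lemma all_shift_iff: "(\<forall>k. P (k + j)) \<longleftrightarrow> (\<forall>k\<ge>j. P (k::nat))"
  by (metis le_add_diff_inverse2 le_add2)

lemma tuple_drop_in_DA_iff:
  "tuple_drop j n t \<in> DA S (n - j) \<longleftrightarrow>
     (\<forall>k\<ge>j. k < n \<longrightarrow> t k \<in> S) \<and> (\<forall>k\<ge>j. Suc k < n \<longrightarrow> t k \<le> t (Suc k))"
  using all_shift_iff[of "\<lambda>k. k < n \<longrightarrow> t k \<in> S" j]
    all_shift_iff[of "\<lambda>k. Suc k < n \<longrightarrow> t k \<le> t (Suc k)" j]
  by (simp add: DA_iff tuple_drop_def less_diff_conv)

lemma countable_Int_below:
  fixes A B :: "'a::order set"
  assumes "\<forall>a\<in>A. \<forall>b\<in>B. a \<le> b"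
  shows "countable (A \<inter> B)"
proof (cases "A \<inter> B = {}")
  case False
  then obtain c where "c \<in> A \<inter> B" by blast
  with assms have "A \<inter> B \<subseteq> {c}" by (auto intro: order.antisym)
  then show ?thesis by (rule countable_subset) simp
qed simp

lemma DA_Un_imp_split:
  assumes below: "\<forall>a\<in>A. \<forall>b\<in>B. a \<le> b" and avoid: "\<forall>k<n. t k \<notin> A \<inter> B"
    and tD: "t \<in> DA (A \<union> B) n"
  shows "\<exists>j\<le>n. restrict t {..<j} \<in> DA A j \<and> tuple_drop j n t \<in> DA B (n - j)"
proof -
  have AB: "t k \<in> A \<union> B" if "k < n" for k
    using tD that by (simp add: DA_iff)
  have "\<exists>j\<le>n. (\<forall>k<j. t k \<notin> B) \<and> (j < n \<longrightarrow> t j \<in> B)"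
  proof (cases "\<exists>k. k < n \<and> t k \<in> B")
    case True
    then obtain j where "j < n" "t j \<in> B" "\<forall>k<j. \<not> (k < n \<and> t k \<in> B)"
      using exists_least_iff[of "\<lambda>k. k < n \<and> t k \<in> B"] by blast
    then show ?thesis
      by (intro exI[of _ j]) auto
  qed auto
  then obtain j where j: "j \<le> n" "\<forall>k<j. t k \<notin> B" "j < n \<longrightarrow> t j \<in> B"
    by blast
  \<comment> \<open>a later point in \<open>A\<close> would be squeezed onto \<open>t j\<close> and so lie in \<open>A \<inter> B\<close>\<close>
  have "t k \<in> B" if "j \<le> k" "k < n" for k
  proof (rule ccontr)
    assume "t k \<notin> B"
    then have "t k \<in> A" "t j \<in> B"
      using AB j that by auto
    with below have "t k \<le> t j" by blast
    moreover have "t j \<le> t k"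
      using DA_mono[OF tD that] .
    ultimately have "t k = t j" by (rule order.antisym)
    with \<open>t k \<in> A\<close> \<open>t j \<in> B\<close> avoid that show False by auto
  qed
  moreover have "t k \<in> A" if "k < j" for k
  proof -
    have "k < n" using that j(1) by simp
    then show ?thesis using AB j(2) that by auto
  qed
  moreover have "\<forall>k. Suc k < n \<longrightarrow> t k \<le> t (Suc k)"
    using tD by (simp add: DA_iff)
  ultimately show ?thesis
    using j(1) by (intro exI[of _ j]) (auto simp: restrict_in_DA_iff tuple_drop_in_DA_iff)
qed

lemma DA_Un_if_split:
  assumes below: "\<forall>a\<in>A. \<forall>b\<in>B. a \<le> b" and t: "t \<in> extensional {..<n}"
    and split: "restrict t {..<j} \<in> DA A j" "tuple_drop j n t \<in> DA B (n - j)"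
  shows "t \<in> DA (A \<union> B) n"
proof -
  from split obtain inA: "\<forall>k<j. t k \<in> A" "\<forall>k. Suc k < j \<longrightarrow> t k \<le> t (Suc k)"
    and inB: "\<forall>k\<ge>j. k < n \<longrightarrow> t k \<in> B" "\<forall>k\<ge>j. Suc k < n \<longrightarrow> t k \<le> t (Suc k)"
    by (auto simp: restrict_in_DA_iff tuple_drop_in_DA_iff)
  have "t k \<le> t (Suc k)" if "Suc k < n" for k
  proof (cases "Suc k < j")
    case False
    show ?thesis
    proof (cases "j \<le> k")
      case False
      with \<open>\<not> Suc k < j\<close> have "Suc k = j" by simp
      then have "t k \<in> A" "t (Suc k) \<in> B"
        using inA(1) inB(1) that by auto
      with below show ?thesis by blast
    qed (use inB(2) that in simp)
  qed (use inA(2) in simp)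
  moreover have "t k \<in> A \<union> B" if "k < n" for k
    using inA inB that by (cases "k < j") auto
  ultimately show ?thesis
    using t by (simp add: DA_iff)
qed

lemma DA_Un_iff:
  assumes "\<forall>a\<in>A. \<forall>b\<in>B. a \<le> b" "\<forall>k<n. t k \<notin> A \<inter> B" "t \<in> extensional {..<n}"
  shows "t \<in> DA (A \<union> B) n \<longleftrightarrow>
    (\<exists>j\<le>n. restrict t {..<j} \<in> DA A j \<and> tuple_drop j n t \<in> DA B (n - j))"
  using DA_Un_imp_split[OF assms(1,2)] DA_Un_if_split[OF assms(1,3)] by blast

lemma DA_split_unique:
  assumes avoid: "\<forall>k<n. t k \<notin> A \<inter> B"
    and "i \<le> n" "restrict t {..<i} \<in> DA A i" "tuple_drop i n t \<in> DA B (n - i)"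
    and "j \<le> n" "restrict t {..<j} \<in> DA A j" "tuple_drop j n t \<in> DA B (n - j)"
  shows "i = j"
proof -
  have no_overlap: False if "i' < j'" "j' \<le> n" "restrict t {..<j'} \<in> DA A j'"
      "tuple_drop i' n t \<in> DA B (n - i')" for i' j'
    using that avoid by (auto simp: restrict_in_DA_iff tuple_drop_in_DA_iff)
  show ?thesis
    using assms no_overlap by (metis linorder_neqE_nat)
qed

lemma indicator_DA_Un:
  assumes below: "\<forall>a\<in>A. \<forall>b\<in>B. a \<le> b" and avoid: "\<forall>k<n. t k \<notin> A \<inter> B"
    and t: "t \<in> extensional {..<n}"
  shows "indicator (DA (A \<union> B) n) t =
    (\<Sum>j\<le>n. indicator (DA A j) (restrict t {..<j}) * indicator (DA B (n - j)) (tuple_drop j n t) :: real)"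
proof (cases "t \<in> DA (A \<union> B) n")
  case True
  then obtain j where j: "j \<le> n" "restrict t {..<j} \<in> DA A j" "tuple_drop j n t \<in> DA B (n - j)"
    using DA_Un_iff[OF assms] by blast
  have "(\<Sum>i\<le>n. indicator (DA A i) (restrict t {..<i}) * indicator (DA B (n - i)) (tuple_drop i n t))
      = (\<Sum>i\<le>n. if i = j then 1 else 0 :: real)"
  proof (rule sum.cong[OF refl])
    fix i assume "i \<in> {..n}"
    show "indicator (DA A i) (restrict t {..<i}) * indicator (DA B (n - i)) (tuple_drop i n t)
        = (if i = j then 1 else 0 :: real)"
    proof (cases "restrict t {..<i} \<in> DA A i \<and> tuple_drop i n t \<in> DA B (n - i)")
      case True
      with \<open>i \<in> {..n}\<close> have "i = j"
        using DA_split_unique[OF avoid _ _ _ j] by auto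
      with True show ?thesis by simp
    next
      case False
      with j show ?thesis by (auto simp: indicator_def)
    qed
  qed
  also have "\<dots> = 1"
    using j(1) by simp
  finally show ?thesis
    using True by simp
next
  case False
  then have "\<not> (restrict t {..<j} \<in> DA A j \<and> tuple_drop j n t \<in> DA B (n - j))" if "j \<le> n" for j
    using DA_Un_iff[OF assms] that by blast
  with False show ?thesis
    by (simp add: indicator_def)
qed

section \<open>Iterated integrals over a union of diangles\<close>

definition chain_integrand :: "(real \<times> real) set \<Rightarrow> nat \<Rightarrow>
    (nat \<Rightarrow> real \<times> real \<Rightarrow> 'b::real_normed_field) \<Rightarrow> (nat \<Rightarrow> real \<times> real) \<Rightarrow> 'b"
  where "chain_integrand S n F t = indicator (DA S n) t *\<^sub>R (\<Prod>k<n. F k (t k))"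

lemma prod_lessThan_restrict_tuple_drop:
  assumes "j \<le> n"
  shows "(\<Prod>k<n. F k (t k)) =
    (\<Prod>k<j. F k (restrict t {..<j} k)) * (\<Prod>k<n - j. F (k + j) (tuple_drop j n t k))"
proof -
  have "(\<Prod>k<n. F k (t k)) = (\<Prod>k\<in>{0..<j}. F k (t k)) * (\<Prod>k\<in>{0 + j..<(n - j) + j}. F k (t k))"
    using prod.atLeastLessThan_concat[of 0 j n "\<lambda>k. F k (t k)"] assms by (simp add: atLeast0LessThan)
  also have "\<dots> = (\<Prod>k<j. F k (restrict t {..<j} k)) * (\<Prod>k<n - j. F (k + j) (tuple_drop j n t k))"
    unfolding prod.shift_bounds_nat_ivl by (simp add: atLeast0LessThan tuple_drop_def)
  finally show ?thesis .
qed

lemma chain_integrand_restrict_mult_tuple_drop: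
  assumes "j \<le> n"
  shows "chain_integrand A j F (restrict t {..<j}) * chain_integrand B (n - j) (\<lambda>k. F (k + j)) (tuple_drop j n t)
    = (indicator (DA A j) (restrict t {..<j}) * indicator (DA B (n - j)) (tuple_drop j n t)) *\<^sub>R
      (\<Prod>k<n. F k (t k))"
  by (simp add: chain_integrand_def prod_lessThan_restrict_tuple_drop[OF assms, of F t])

lemma chain_integrand_Un:
  assumes "\<forall>a\<in>A. \<forall>b\<in>B. a \<le> b" "\<forall>k<n. t k \<notin> A \<inter> B" "t \<in> extensional {..<n}"
  shows "chain_integrand (A \<union> B) n F t =
    (\<Sum>j\<le>n. chain_integrand A j F (restrict t {..<j}) *
      chain_integrand B (n - j) (\<lambda>k. F (k + j)) (tuple_drop j n t))"
proof -
  have "chain_integrand (A \<union> B) n F t = (\<Sum>j\<le>n. (indicator (DA A j) (restrict t {..<j}) *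
      indicator (DA B (n - j)) (tuple_drop j n t)) *\<^sub>R (\<Prod>k<n. F k (t k)))"
    unfolding chain_integrand_def indicator_DA_Un[OF assms] scaleR_sum_left ..
  then show ?thesis
    by (simp add: chain_integrand_restrict_mult_tuple_drop)
qed

lemma integrable_chain_integrand:
  fixes F :: "nat \<Rightarrow> real \<times> real \<Rightarrow> 'b::{real_normed_field, banach, second_countable_topology}"
  assumes "\<And>k. k < n \<Longrightarrow> integrable lborel (F k)" and "S \<in> sets borel"
  shows "integrable (lborel_pow n) (chain_integrand S n F)"
  unfolding chain_integrand_def
  using assms by (intro integrable_mult_indicator sets_DA
      product_sigma_finite.product_integrable_prod[OF lborel.product_sigma_finite_const]) auto

lemma integrable_chain_integrand_split:
  fixes F :: "nat \<Rightarrow> real \<times> real \<Rightarrow> 'b::{real_normed_field, banach, second_countable_topology}"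
  assumes F: "\<And>k. k < n \<Longrightarrow> integrable lborel (F k)"
    and A: "A \<in> sets borel" and B: "B \<in> sets borel" and j: "j \<le> n"
  shows "integrable (lborel_pow n) (\<lambda>t. chain_integrand A j F (restrict t {..<j}) *
    chain_integrand B (n - j) (\<lambda>k. F (k + j)) (tuple_drop j n t))"
proof -
  let ?E = "((\<lambda>t. restrict t {..<j}) -` DA A j \<inter> space (lborel_pow n)) \<inter>
    (tuple_drop j n -` DA B (n - j) \<inter> space (lborel_pow n))"
  have "?E \<in> sets (lborel_pow n)"
    using j by (intro sets.Int measurable_sets[OF measurable_restrict_subset]
        measurable_sets[OF measurable_tuple_drop] sets_DA A B) auto
  then have "integrable (lborel_pow n) (\<lambda>t. indicator ?E t *\<^sub>R (\<Prod>k<n. F k (t k)))"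
    using F by (intro integrable_mult_indicator
        product_sigma_finite.product_integrable_prod[OF lborel.product_sigma_finite_const]) auto
  moreover have "chain_integrand A j F (restrict t {..<j}) *
      chain_integrand B (n - j) (\<lambda>k. F (k + j)) (tuple_drop j n t) =
      indicator ?E t *\<^sub>R (\<Prod>k<n. F k (t k))" if "t \<in> space (lborel_pow n)" for t
    using that by (simp add: chain_integrand_restrict_mult_tuple_drop[OF j] indicator_def)
  ultimately show ?thesis
    by (simp cong: Bochner_Integration.integrable_cong)
qed

lemma chain_integral_Un:
  fixes F :: "nat \<Rightarrow> real \<times> real \<Rightarrow> 'b::{real_normed_field, banach, second_countable_topology}"
  assumes F: "\<And>k. k < n \<Longrightarrow> integrable lborel (F k)"
    and A: "A \<in> sets borel" and B: "B \<in> sets borel" and below: "\<forall>a\<in>A. \<forall>b\<in>B. a \<le> b"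
  shows "integral\<^sup>L (lborel_pow n) (chain_integrand (A \<union> B) n F) =
    (\<Sum>j\<le>n. integral\<^sup>L (lborel_pow j) (chain_integrand A j F) *
      integral\<^sup>L (lborel_pow (n - j)) (chain_integrand B (n - j) (\<lambda>k. F (k + j))))"
proof -
  define f where "f j t = chain_integrand A j F (restrict t {..<j}) *
    chain_integrand B (n - j) (\<lambda>k. F (k + j)) (tuple_drop j n t)" for j t
  have int: "integrable (lborel_pow n) (f j)" if "j \<le> n" for j
    unfolding f_def using F A B that by (rule integrable_chain_integrand_split)
  \<comment> \<open>\<open>A \<inter> B\<close> is at most one point, so almost every tuple splits at a unique index\<close>
  have avoid: "AE t in lborel_pow n. \<forall>k\<in>{..<n}. t k \<notin> A \<inter> B"
    by (intro lborel.AE_PiM_components_notin_null_set countable_imp_null_set_lborel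
        countable_Int_below below) simp
  have "AE t in lborel_pow n. chain_integrand (A \<union> B) n F t = (\<Sum>j\<le>n. f j t)"
  proof (rule AE_mp[OF avoid AE_I2], intro impI)
    fix t assume "t \<in> space (lborel_pow n)" "\<forall>k\<in>{..<n}. t k \<notin> A \<inter> B"
    then show "chain_integrand (A \<union> B) n F t = (\<Sum>j\<le>n. f j t)"
      unfolding f_def by (intro chain_integrand_Un below) (auto simp: space_PiM PiE_def)
  qed
  then have "integral\<^sup>L (lborel_pow n) (chain_integrand (A \<union> B) n F) =
      integral\<^sup>L (lborel_pow n) (\<lambda>t. \<Sum>j\<le>n. f j t)"
    using int F A B
    by (intro integral_cong_AE borel_measurable_integrable integrable_chain_integrand
        sets.Un Bochner_Integration.integrable_sum) auto
  also have "\<dots> = (\<Sum>j\<le>n. integral\<^sup>L (lborel_pow n) (f j))"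
    using int by (intro Bochner_Integration.integral_sum) auto
  also have "\<dots> = (\<Sum>j\<le>n. integral\<^sup>L (lborel_pow j) (chain_integrand A j F) *
      integral\<^sup>L (lborel_pow (n - j)) (chain_integrand B (n - j) (\<lambda>k. F (k + j))))"
    using int F B unfolding f_def
    by (intro sum.cong refl lborel.integral_PiM_split borel_measurable_integrable
        integrable_chain_integrand) auto
  finally show ?thesis .
qed

lemma iter_int_eq_chain_integral:
  "iter_int g S ws =
    integral\<^sup>L (lborel_pow (length ws)) (chain_integrand S (length ws) (\<lambda>k. pullback g (ws ! k)))"
  unfolding iter_int_def set_lebesgue_integral_def chain_integrand_def[abs_def] ..

lemma chain_integrand_cong:
  assumes "\<And>k x. k < n \<Longrightarrow> x \<in> S \<Longrightarrow> F k x = G k x"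
  shows "chain_integrand S n F = chain_integrand S n G"
proof
  fix t
  show "chain_integrand S n F t = chain_integrand S n G t"
    using assms by (cases "t \<in> DA S n") (auto simp: chain_integrand_def DA_iff intro!: prod.cong)
qed

lemma iter_int_Un:
  assumes integ: "\<forall>f\<in>set ws. set_integrable lborel (A \<union> B) (pullback g f)"
    and A: "A \<in> sets borel" and B: "B \<in> sets borel" and below: "\<forall>a\<in>A. \<forall>b\<in>B. a \<le> b"
  shows "iter_int g (A \<union> B) ws =
    (\<Sum>j\<le>length ws. iter_int g A (take j ws) * iter_int g B (drop j ws))"
proof -
  define F where "F k x = indicator (A \<union> B) x *\<^sub>R pullback g (ws ! k) x" for k x
  have F: "integrable lborel (F k)" if "k < length ws" for k
    using integ that unfolding F_def set_integrable_def by simp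
  have "chain_integrand (A \<union> B) (length ws) (\<lambda>k. pullback g (ws ! k)) =
      chain_integrand (A \<union> B) (length ws) F"
    by (rule chain_integrand_cong) (simp add: F_def)
  then have "iter_int g (A \<union> B) ws =
      integral\<^sup>L (lborel_pow (length ws)) (chain_integrand (A \<union> B) (length ws) F)"
    by (simp add: iter_int_eq_chain_integral)
  also have "\<dots> = (\<Sum>j\<le>length ws. integral\<^sup>L (lborel_pow j) (chain_integrand A j F) *
      integral\<^sup>L (lborel_pow (length ws - j)) (chain_integrand B (length ws - j) (\<lambda>k. F (k + j))))"
    by (rule chain_integral_Un[OF F A B below])
  also have "\<dots> = (\<Sum>j\<le>length ws. iter_int g A (take j ws) * iter_int g B (drop j ws))"
  proof (intro sum.cong refl)
    fix j assume "j \<in> {..length ws}"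
    then have "chain_integrand A j F =
        chain_integrand A (length (take j ws)) (\<lambda>k. pullback g (take j ws ! k))"
      "chain_integrand B (length ws - j) (\<lambda>k. F (k + j)) =
        chain_integrand B (length (drop j ws)) (\<lambda>k. pullback g (drop j ws ! k))"
      by (auto simp: F_def add.commute intro!: chain_integrand_cong)
    then show "integral\<^sup>L (lborel_pow j) (chain_integrand A j F) *
        integral\<^sup>L (lborel_pow (length ws - j)) (chain_integrand B (length ws - j) (\<lambda>k. F (k + j))) =
        iter_int g A (take j ws) * iter_int g B (drop j ws)"
      using \<open>j \<in> {..length ws}\<close> by (simp add: iter_int_eq_chain_integral)
  qed
  finally show ?thesis .
qed

lemma Ja_Un:
  assumes integ: "\<forall>f\<in>set ws. set_integrable lborel (A \<union> B) (pullback g f)"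
    and A: "A \<in> sets borel" and B: "B \<in> sets borel" and below: "\<forall>a\<in>A. \<forall>b\<in>B. a \<le> b"
  shows "Ja g (A \<union> B) ws = nc_mult (Ja g A ws) (Ja g B ws)"
proof
  fix w :: "nat list"
  show "Ja g (A \<union> B) ws w = nc_mult (Ja g A ws) (Ja g B ws) w"
  proof (cases "set w \<subseteq> {..<length ws}")
    case True
    let ?v = "map (\<lambda>i. ws ! i) w"
    have "\<forall>f\<in>set ?v. set_integrable lborel (A \<union> B) (pullback g f)"
      using integ True by auto
    then have "Ja g (A \<union> B) ws w =
        (\<Sum>k\<le>length w. iter_int g A (take k ?v) * iter_int g B (drop k ?v))"
      using True by (simp add: Ja_def iter_int_Un[OF _ A B below])
    also have "\<dots> = nc_mult (Ja g A ws) (Ja g B ws) w"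
      using True by (simp add: nc_mult_def Ja_def take_map drop_map
          order_trans[OF set_take_subset] order_trans[OF set_drop_subset])
    finally show ?thesis .
  next
    case False
    then have "\<not> set (take k w) \<subseteq> {..<length ws} \<or> \<not> set (drop k w) \<subseteq> {..<length ws}" for k
      by (metis append_take_drop_id set_append Un_subset_iff)
    then show ?thesis
      using False by (auto simp: Ja_def nc_mult_def intro!: sum.neutral)
  qed
qed

lemma diangle_imp_compact: "diangle A p q \<Longrightarrow> compact A"
  unfolding diangle_def by (metis homeomorphic_compactness compact_cball)

theorem mainTheorem3:
  fixes d :: int and g :: "real \<times> real \<Rightarrow> hpt"
    and ws :: "(complex \<Rightarrow> complex \<Rightarrow> complex) list"
    and A B :: "(real \<times> real) set"
  assumes K: "real_quadratic_param d"
    and forms: "\<forall>f\<in>set ws. holo_form f \<and> cont_at_cusps d f"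
    and memb: "membrane d 2 g"
    and integ: "\<forall>f\<in>set ws. set_integrable lborel (sq 2) (pullback g f)"
    and A: "A \<subseteq> {0..1} \<times> {0..1}" "diangle A (0, 0) (1, 1)"
    and B: "B \<subseteq> {1..2} \<times> {1..2}" "diangle B (1, 1) (2, 2)"
  shows "iter_int g (A \<union> B) ws =
           (\<Sum>j\<le>length ws. iter_int g A (take j ws) * iter_int g B (drop j ws)) \<and>
         Ja g (A \<union> B) ws = nc_mult (Ja g A ws) (Ja g B ws)"
proof -
  have borel: "A \<in> sets borel" "B \<in> sets borel"
    using A(2) B(2) by (auto intro: borel_compact diangle_imp_compact)
  have below: "\<forall>a\<in>A. \<forall>b\<in>B. a \<le> b"
    using A(1) B(1) by (force simp: less_eq_prod_def)
  have "A \<union> B \<subseteq> sq 2"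
    using A(1) B(1) by (auto simp: sq_def)
  with integ borel have "\<forall>f\<in>set ws. set_integrable lborel (A \<union> B) (pullback g f)"
    by (auto intro: set_integrable_subset)
  with borel below show ?thesis
    by (simp add: iter_int_Un Ja_Un)
qed

end
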